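(* Let $\Omega$ be a set of permutations. Then $$\mathcal{F}(\Omega)=\gamma\bigl(\mathrm{Modasc}[\Omega^{-1}]\bigr),\qquad\text{where } [\Omega^{-1}]=\bigcup_{\sigma\in\Omega}[\sigma^{-1}],$$ and $\mathrm{Modasc}[\Omega^{-1}]$ is the set of modified ascent sequences avoiding every Cayley permutation in $[\Omega^{-1}]$.
   Context: A Cayley permutation of length $n$ is a word of positive integers in which every integer from $1$ to its maximum occurs; $\mathrm{Cay}$ is the set of all of them. Containment $y\le x$: there are indices $i_1<\dots<i_k$ ($k$ the length of $y$) with $x(i_s)<x(i_t)\iff y(s)<y(t)$ and $x(i_s)=x(i_t)\iff y(s)=y(t)$; otherwise $x$ avoids $y$. For $x\in\mathrm{Cay}_n$, $\gamma(x)$ is the permutation obtained by sorting the pairs $(x(i),i)$ increasingly by first coordinate, ties by decreasing second coordinate, and reading the second coordinates; $\gamma(E)=\{\gamma(x):x\in E\}$. $x\sim y$ iff $\gamma(x)=\gamma(y)$, $[y]$ is the class of $y$. Modified ascent sequences: $\mathrm{Modasc}_0=\{\text{empty word}\}$, $\mathrm{Modasc}_1=\{1\}$; for $n\ge2$, $x\in\mathrm{Modasc}_n$ iff there is $v\in\mathrm{Modasc}_{n-1}$ with last letter $b$ such that either $x=va$ with $1\le a\le b$, or $x=\tilde va$ with $b<a\le2+\mathrm{asc}(v)$, where $\mathrm{asc}(v)=|\{i:v(i)<v(i+1)\}|$ and $\tilde v$ is $v$ with every entry $c\ge a$ increased by one. A permutation $\pi$ is Fishburn if there are no indices $i$ and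 $k>i+1$ with $\pi(i)<\pi(i+1)$ and $\pi(k)=\pi(i)-1$; $\mathcal{F}(\Omega)$ is the set of Fishburn permutations avoiding every pattern in $\Omega$. *)

theory Defs
  imports Main "HOL-Library.Product_Lexorder"
begin

text \<open>Words of positive integers are represented as lists of naturals; positions are
  0-indexed in the list, but values are the paper's values (positive integers).\<close>

definition cay :: "nat list \<Rightarrow> bool" where
  "cay x \<longleftrightarrow> (\<exists>m. set x = {1..m})"

definition is_perm :: "nat list \<Rightarrow> bool" where
  "is_perm p \<longleftrightarrow> distinct p \<and> set p = {1..length p}"

definition contains :: "nat list \<Rightarrow> nat list \<Rightarrow> bool" where
  "contains x y \<longleftrightarrow> (\<exists>is. length is = length y \<and> sorted_wrt (<) is \<and>
     (\<forall>i\<in>set is. i < length x) \<and>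
     (\<forall>s<length y. \<forall>t<length y.
        (x ! (is ! s) < x ! (is ! t) \<longleftrightarrow> y ! s < y ! t) \<and>
        (x ! (is ! s) = x ! (is ! t) \<longleftrightarrow> y ! s = y ! t)))"

definition gamma :: "nat list \<Rightarrow> nat list" where
  "gamma x = map snd (sort_key (\<lambda>(a, i). (a, length x - i)) (zip x [1..<Suc (length x)]))"

definition cls :: "nat list \<Rightarrow> nat list set" where
  "cls y = {x. cay x \<and> gamma x = gamma y}"

definition asc :: "nat list \<Rightarrow> nat" where
  "asc v = card {i. Suc i < length v \<and> v ! i < v ! Suc i}"

inductive_set modasc :: "nat list set" where
  empty: "[] \<in> modasc"
| one: "[1] \<in> modasc"
| append_le: "v \<in> modasc \<Longrightarrow> v \<noteq> [] \<Longrightarrow> 1 \<le> a \<Longrightarrow> a \<le> last v \<Longrightarrow> v @ [a] \<in> modasc"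
| append_gt: "v \<in> modasc \<Longrightarrow> v \<noteq> [] \<Longrightarrow> last v < a \<Longrightarrow> a \<le> 2 + asc v \<Longrightarrow>
     map (\<lambda>c. if a \<le> c then c + 1 else c) v @ [a] \<in> modasc"

definition perm_inv :: "nat list \<Rightarrow> nat list" where
  "perm_inv p = map (\<lambda>j. Suc (LEAST i. i < length p \<and> p ! i = j)) [1..<Suc (length p)]"

definition fishburn :: "nat list \<Rightarrow> bool" where
  "fishburn p \<longleftrightarrow> \<not> (\<exists>i k. Suc i < k \<and> k < length p \<and> p ! i < p ! Suc i \<and> p ! k + 1 = p ! i)"

definition fishburn_av :: "nat list set \<Rightarrow> nat list set" where
  "fishburn_av \<Omega> = {p. is_perm p \<and> fishburn p \<and> (\<forall>\<sigma>\<in>\<Omega>. \<not> contains p \<sigma>)}"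

definition inv_class :: "nat list set \<Rightarrow> nat list set" where
  "inv_class \<Omega> = (\<Union>\<sigma>\<in>\<Omega>. cls (perm_inv \<sigma>))"

definition modasc_av :: "nat list set \<Rightarrow> nat list set" where
  "modasc_av B = {x \<in> modasc. \<forall>y\<in>B. \<not> contains x y}"

end

theory Submission
  imports Defs
begin

text \<open>
  gamma x lists the positions of x value by value, the positions of each value from right to
  left; so gamma x is a concatenation of decreasing runs, one per value, and x is recovered from
  gamma x together with the places where one run ends and the next begins.

  Modified ascent sequences are exactly the Cayley permutations whose ascent tops are the
  leftmost copies of their values. For such x, gamma x is Fishburn: if p < q are adjacent in
  gamma x and p - 1 comes later, then x has no ascent ending at position p, so x(p) has an
  earlier copy, whose position would have to lie strictly between p and q in gamma x.
  Conversely, cut a Fishburn permutation p after every j (but the last) such that p(j) - 1 does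
  not lie to the right of j. The Fishburn condition puts a cut at every ascent, so the blocks
  are decreasing, and the word giving each position p(j) the number of the block of j is a
  modified ascent sequence sent to p by gamma.

  Finally, an occurrence of y in x induces an occurrence of gamma y in gamma x, and every
  occurrence of a permutation s in gamma x arises in this way from some Cayley permutation y
  with gamma y = s, i.e. from an element of [s^-1], since gamma (s^-1) = s. Hence x avoids
  [Omega^-1] if and only if gamma x avoids Omega.
\<close>

section \<open>The sorting permutation gamma\<close>

(* i is a 1-based position of x, as in the output of gamma *)
definition gamma_key :: "nat list \<Rightarrow> nat \<Rightarrow> nat \<times> nat" where
  "gamma_key x i = (x ! (i - 1), length x - i)"

lemma inj_on_gamma_key: "inj_on (gamma_key x) {1..length x}"
  by (auto simp: inj_on_def gamma_key_def)

lemma length_gamma [simp]: "length (gamma x) = length x"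
  by (simp add: gamma_def del: upt_Suc)

lemma set_gamma: "set (gamma x) = {1..length x}"
proof -
  have "map snd (zip x [1..<Suc (length x)]) = [1..<Suc (length x)]"
    by simp
  then show ?thesis
    unfolding gamma_def set_map set_sort by (metis atLeastLessThanSuc_atLeastAtMost set_map set_upt)
qed

lemma distinct_gamma: "distinct (gamma x)"
  by (simp add: card_distinct set_gamma)

lemma is_perm_gamma: "is_perm (gamma x)"
  by (simp add: is_perm_def distinct_gamma set_gamma)

lemma sorted_wrt_gamma_key_gamma:
  "sorted_wrt (\<lambda>i j. gamma_key x i < gamma_key x j) (gamma x)"
proof -
  define zs where "zs = zip x [1..<Suc (length x)]"
  define f where "f = (\<lambda>(a::nat, i::nat). (a, length x - i))"
  have gamma_eq: "gamma x = map snd (sort_key f zs)"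
    by (simp add: gamma_def zs_def f_def)
  have "\<forall>z\<in>set zs. f z = gamma_key x (snd z)"
    by (auto simp: zs_def f_def gamma_key_def set_zip simp del: upt_Suc)
  then have "map (gamma_key x) (gamma x) = map f (sort_key f zs)"
    by (simp add: gamma_eq)
  then have "sorted (map (gamma_key x) (gamma x))"
    by simp
  moreover have "distinct (map (gamma_key x) (gamma x))"
    using distinct_gamma inj_on_gamma_key by (simp add: distinct_map set_gamma)
  ultimately have "sorted_wrt (<) (map (gamma_key x) (gamma x))"
    by (simp add: strict_sorted_iff)
  then show ?thesis
    by (simp add: sorted_wrt_map)
qed

lemma gamma_eq_iff:
  "gamma x = l \<longleftrightarrow> set l = {1..length x} \<and> sorted_wrt (\<lambda>i j. gamma_key x i < gamma_key x j) l"
proof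
  assume l: "set l = {1..length x} \<and> sorted_wrt (\<lambda>i j. gamma_key x i < gamma_key x j) l"
  have "sorted_wrt (<) (map (gamma_key x) l)" "sorted_wrt (<) (map (gamma_key x) (gamma x))"
    using l sorted_wrt_gamma_key_gamma by (simp_all add: sorted_wrt_map)
  then have "map (gamma_key x) (gamma x) = map (gamma_key x) l"
    using l by (intro sorted_distinct_set_unique) (auto simp: strict_sorted_iff set_gamma)
  then show "gamma x = l"
    using l inj_on_gamma_key by (auto intro: map_inj_on simp: set_gamma)
qed (use set_gamma sorted_wrt_gamma_key_gamma in blast)

lemma gamma_key_less_iff:
  assumes "i < length x" "j < length x"
  shows "gamma_key x (gamma x ! i) < gamma_key x (gamma x ! j) \<longleftrightarrow> i < j"
  using sorted_wrt_nth_less[OF sorted_wrt_gamma_key_gamma, of i j x]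
    sorted_wrt_nth_less[OF sorted_wrt_gamma_key_gamma, of j i x] assms
  by (cases i j rule: linorder_cases) auto

lemma gamma_nth_range: "i < length x \<Longrightarrow> gamma x ! i \<in> {1..length x}"
  using set_gamma[of x] by (metis length_gamma nth_mem)

lemma is_perm_nth_range: "is_perm p \<Longrightarrow> i < length p \<Longrightarrow> p ! i \<in> {1..length p}"
  unfolding is_perm_def by (metis nth_mem)

lemma is_perm_nth_eq_iff:
  "is_perm p \<Longrightarrow> i < length p \<Longrightarrow> j < length p \<Longrightarrow> p ! i = p ! j \<longleftrightarrow> i = j"
  unfolding is_perm_def by (simp add: nth_eq_iff_index_eq)

lemma is_perm_obtain_nth:
  assumes "is_perm p" "v \<in> {1..length p}"
  obtains i where "i < length p" "p ! i = v"
  using assms unfolding is_perm_def by (metis in_set_conv_nth)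

lemma length_perm_inv [simp]: "length (perm_inv p) = length p"
  by (simp add: perm_inv_def del: upt_Suc)

lemma perm_inv_nth_nth:
  assumes "is_perm p" "i < length p"
  shows "perm_inv p ! (p ! i - 1) = Suc i"
proof -
  have p_i: "p ! i \<in> {1..length p}"
    using assms by (rule is_perm_nth_range)
  have "(LEAST j. j < length p \<and> p ! j = p ! i) = i"
    using assms by (intro Least_equality) (auto simp: is_perm_nth_eq_iff)
  moreover have "perm_inv p ! (p ! i - 1) = Suc (LEAST j. j < length p \<and> p ! j = p ! i)"
    using p_i by (auto simp: perm_inv_def nth_upt simp del: upt_Suc)
  ultimately show ?thesis
    by simp
qed

lemma nth_perm_inv:
  assumes "is_perm p" "q < length p"
  shows "perm_inv p ! q - 1 < length p \<and> p ! (perm_inv p ! q - 1) = Suc q"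
proof -
  obtain i where "i < length p" "p ! i = Suc q"
    by (rule is_perm_obtain_nth[OF assms(1), of "Suc q"]) (use assms(2) in auto)
  then show ?thesis
    using perm_inv_nth_nth[OF assms(1)] by force
qed

lemma gamma_perm_inv:
  assumes "is_perm s"
  shows "gamma (perm_inv s) = s"
  unfolding gamma_eq_iff
proof
  show "set s = {1..length (perm_inv s)}"
    using assms by (simp add: is_perm_def)
  show "sorted_wrt (\<lambda>i j. gamma_key (perm_inv s) i < gamma_key (perm_inv s) j) s"
    using perm_inv_nth_nth[OF assms] by (auto simp: sorted_wrt_iff_nth_less gamma_key_def)
qed

section \<open>Patterns under gamma\<close>

definition occurs_at :: "nat list \<Rightarrow> nat list \<Rightarrow> nat list \<Rightarrow> bool" where
  "occurs_at x y is \<longleftrightarrow> length is = length y \<and> sorted_wrt (<) is \<and>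
     (\<forall>i\<in>set is. i < length x) \<and>
     (\<forall>s<length y. \<forall>t<length y.
        (x ! (is ! s) < x ! (is ! t) \<longleftrightarrow> y ! s < y ! t) \<and>
        (x ! (is ! s) = x ! (is ! t) \<longleftrightarrow> y ! s = y ! t))"

lemma contains_iff_occurs_at: "contains x y \<longleftrightarrow> (\<exists>is. occurs_at x y is)"
  unfolding contains_def occurs_at_def by blast

lemma occurs_atI:
  assumes "length is = length y" "sorted_wrt (<) is" "\<forall>i\<in>set is. i < length x"
    and "\<And>s t. s < length y \<Longrightarrow> t < length y \<Longrightarrow> x ! (is ! s) < x ! (is ! t) \<longleftrightarrow> y ! s < y ! t"
  shows "occurs_at x y is"
proof -
  have "x ! (is ! s) = x ! (is ! t) \<longleftrightarrow> y ! s = y ! t" if "s < length y" "t < length y" for s t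
    using assms(4)[OF that] assms(4)[OF that(2,1)] by (metis linorder_neqE_nat less_irrefl)
  then show ?thesis
    unfolding occurs_at_def using assms by blast
qed

lemma occurs_at_nth_less_iff:
  "occurs_at x y is \<Longrightarrow> a < length y \<Longrightarrow> b < length y \<Longrightarrow> is ! a < is ! b \<longleftrightarrow> a < b"
  unfolding occurs_at_def by (metis linorder_neqE_nat not_less_iff_gr_or_eq sorted_wrt_nth_less)

lemma occurs_at_nth_bound: "occurs_at x y is \<Longrightarrow> a < length y \<Longrightarrow> is ! a < length x"
  unfolding occurs_at_def by (metis nth_mem)

lemma occurs_at_gamma_key_less_iff:
  assumes "occurs_at x y is" "a < length y" "b < length y"
  shows "gamma_key x (Suc (is ! a)) < gamma_key x (Suc (is ! b)) \<longleftrightarrow>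
    gamma_key y (Suc a) < gamma_key y (Suc b)"
proof -
  have "x ! (is ! a) < x ! (is ! b) \<longleftrightarrow> y ! a < y ! b"
    "x ! (is ! a) = x ! (is ! b) \<longleftrightarrow> y ! a = y ! b"
    using assms by (auto simp: occurs_at_def)
  moreover have "is ! b < is ! a \<longleftrightarrow> b < a"
    using assms by (simp add: occurs_at_nth_less_iff)
  moreover have "is ! a < length x" "is ! b < length x"
    using assms occurs_at_nth_bound by blast+
  ultimately show ?thesis
    using assms by (auto simp: gamma_key_def)
qed

lemma occurs_at_imp_contains_gamma:
  assumes occ: "occurs_at x y is"
  shows "contains (gamma x) (gamma y)"
proof -
  define g where "g = gamma x"
  define s where "s = gamma y"
  define k where "k = length y"
  define pos where "pos = (\<lambda>t. is ! (s ! t - 1))"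
  have s_range: "s ! t - 1 < k \<and> Suc (s ! t - 1) = s ! t" if "t < k" for t
    using gamma_nth_range[of t y] that by (auto simp: s_def k_def)
  define js where "js = map (\<lambda>t. perm_inv g ! pos t - 1) [0..<k]"
  have js: "js ! t < length g \<and> g ! (js ! t) = Suc (pos t)" if "t < k" for t
    using nth_perm_inv[OF is_perm_gamma, of "pos t" x] occurs_at_nth_bound[OF occ] s_range that
    by (simp add: js_def pos_def g_def k_def)
  have "occurs_at g s js"
  proof (rule occurs_atI)
    show "length js = length s"
      by (simp add: js_def s_def k_def)
    show "\<forall>i\<in>set js. i < length g"
      using js by (auto simp: in_set_conv_nth js_def)
    show "g ! (js ! t) < g ! (js ! u) \<longleftrightarrow> s ! t < s ! u" if "t < length s" "u < length s" for t u
    proof -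
      have "t < k" "u < k"
        using that by (simp_all add: s_def k_def)
      then show ?thesis
        using js s_range[of t] s_range[of u] occurs_at_nth_less_iff[OF occ, of "s ! t - 1" "s ! u - 1"]
        by (auto simp: pos_def k_def)
    qed
    show "sorted_wrt (<) js"
      unfolding sorted_wrt_iff_nth_less
    proof (intro allI impI)
      fix t u assume tu: "t < u" "u < length js"
      then have k: "t < k" "u < k"
        by (simp_all add: js_def)
      then have "gamma_key y (Suc (s ! t - 1)) < gamma_key y (Suc (s ! u - 1))"
        using gamma_key_less_iff[of t y u] s_range tu by (simp add: s_def k_def)
      then have "gamma_key x (Suc (pos t)) < gamma_key x (Suc (pos u))"
        using occurs_at_gamma_key_less_iff[OF occ] s_range k by (simp add: pos_def k_def)
      then show "js ! t < js ! u"
        using gamma_key_less_iff[of "js ! t" x "js ! u"] js tu by (simp add: g_def js_def)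
    qed
  qed
  then show ?thesis
    unfolding contains_iff_occurs_at g_def s_def by blast
qed

definition rank :: "nat set \<Rightarrow> nat \<Rightarrow> nat" where
  "rank V v = card {w \<in> V. w \<le> v}"

lemma rank_less_rank:
  assumes "finite V" "v \<in> V" "w \<in> V" "v < w"
  shows "rank V v < rank V w"
proof -
  have "{u \<in> V. u \<le> v} \<subseteq> {u \<in> V. u \<le> w}" "w \<in> {u \<in> V. u \<le> w} - {u \<in> V. u \<le> v}"
    using assms by auto
  then have "{u \<in> V. u \<le> v} \<subset> {u \<in> V. u \<le> w}"
    by blast
  then show ?thesis
    unfolding rank_def using assms(1) by (simp add: psubset_card_mono)
qed

lemma rank_less_iff:
  "finite V \<Longrightarrow> v \<in> V \<Longrightarrow> w \<in> V \<Longrightarrow> rank V v < rank V w \<longleftrightarrow> v < w"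
  using rank_less_rank by (metis less_asym linorder_neqE_nat less_irrefl)

lemma rank_image:
  assumes "finite V"
  shows "rank V ` V = {1..card V}"
proof (rule card_subset_eq)
  show "rank V ` V \<subseteq> {1..card V}"
    using assms by (auto simp: rank_def Suc_le_eq card_gt_0_iff intro!: card_mono)
  have "inj_on (rank V) V"
    using rank_less_iff[OF assms] by (metis inj_onI linorder_neqE_nat less_irrefl)
  then show "card (rank V ` V) = card {1..card V}"
    by (simp add: card_image)
qed simp

lemma ex_cay_occurs_at:
  assumes "sorted_wrt (<) is" "\<forall>i\<in>set is. i < length x"
  shows "\<exists>y. cay y \<and> occurs_at x y is"
proof -
  define V where "V = set (map (nth x) is)"
  define y where "y = map (rank V) (map (nth x) is)"
  have "set y = {1..card V}"
    using rank_image[of V] by (simp add: y_def V_def image_comp)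
  then have "cay y"
    unfolding cay_def by blast
  moreover have "occurs_at x y is"
    using assms rank_less_iff[of V] by (intro occurs_atI) (auto simp: y_def V_def)
  ultimately show ?thesis
    by blast
qed

lemma gamma_eq_if_occurs_at:
  assumes occ: "occurs_at x y ix" and s: "is_perm s" "length s = length y"
    and sorted: "\<And>i j. i < j \<Longrightarrow> j < length s \<Longrightarrow>
      gamma_key x (Suc (ix ! (s ! i - 1))) < gamma_key x (Suc (ix ! (s ! j - 1)))"
  shows "gamma y = s"
  unfolding gamma_eq_iff sorted_wrt_iff_nth_less
proof (intro conjI allI impI)
  show "set s = {1..length y}"
    using s by (simp add: is_perm_def)
  fix i j assume ij: "i < j" "j < length s"
  have s_range: "s ! t - 1 < length y \<and> Suc (s ! t - 1) = s ! t" if "t < length s" for t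
    using is_perm_nth_range[OF s(1) that] s(2) by auto
  have "gamma_key y (Suc (s ! i - 1)) < gamma_key y (Suc (s ! j - 1))"
    using sorted[OF ij] occurs_at_gamma_key_less_iff[OF occ] s_range ij by simp
  then show "gamma_key y (s ! i) < gamma_key y (s ! j)"
    using s_range ij by simp
qed

lemma contains_gamma_imp_ex_cay:
  assumes s: "is_perm s" and "contains (gamma x) s"
  shows "\<exists>y. cay y \<and> gamma y = s \<and> contains x y"
proof -
  define g where "g = gamma x"
  define k where "k = length s"
  obtain js where js: "occurs_at g s js"
    using assms(2) by (auto simp: contains_iff_occurs_at g_def)
  define pos where "pos = (\<lambda>i. g ! (js ! i) - 1)"
  have pos: "pos i < length x \<and> Suc (pos i) = g ! (js ! i)" if "i < k" for i
    using gamma_nth_range[of "js ! i" x] occurs_at_nth_bound[OF js] that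
    by (force simp: pos_def g_def k_def)
  have pos_less_iff: "pos i < pos j \<longleftrightarrow> s ! i < s ! j" if "i < k" "j < k" for i j
  proof -
    have "g ! (js ! i) < g ! (js ! j) \<longleftrightarrow> s ! i < s ! j"
      using js that by (simp add: occurs_at_def k_def)
    then show ?thesis
      using pos[OF that(1)] pos[OF that(2)] by (metis Suc_less_eq)
  qed
  define ix where "ix = map (\<lambda>v. pos (perm_inv s ! v - 1)) [0..<k]"
  have s_inv: "perm_inv s ! v - 1 < k \<and> s ! (perm_inv s ! v - 1) = Suc v" if "v < k" for v
    using nth_perm_inv[OF s] that by (simp add: k_def)
  have ix_at: "ix ! (s ! i - 1) = pos i" if "i < k" for i
    using is_perm_nth_range[OF s] perm_inv_nth_nth[OF s] that by (force simp: ix_def k_def)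
  have "sorted_wrt (<) ix"
    using s_inv pos_less_iff by (auto simp: sorted_wrt_iff_nth_less ix_def)
  moreover have "\<forall>i\<in>set ix. i < length x"
    using s_inv pos by (auto simp: ix_def)
  ultimately obtain y where y: "cay y" "occurs_at x y ix"
    using ex_cay_occurs_at by blast
  have "gamma y = s"
  proof (rule gamma_eq_if_occurs_at[OF y(2) s])
    show "length s = length y"
      using y(2) by (simp add: occurs_at_def ix_def k_def)
    fix i j assume ij: "i < j" "j < length s"
    have "gamma_key x (g ! (js ! i)) < gamma_key x (g ! (js ! j))"
      using gamma_key_less_iff occurs_at_nth_less_iff[OF js] occurs_at_nth_bound[OF js] ij
      by (simp add: g_def)
    then show "gamma_key x (Suc (ix ! (s ! i - 1))) < gamma_key x (Suc (ix ! (s ! j - 1)))"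
      using ix_at pos ij by (simp add: k_def)
  qed
  then show ?thesis
    using y contains_iff_occurs_at by blast
qed

lemma contains_gamma_iff:
  assumes "is_perm s"
  shows "contains (gamma x) s \<longleftrightarrow> (\<exists>y\<in>cls (perm_inv s). contains x y)"
  using contains_gamma_imp_ex_cay[OF assms] occurs_at_imp_contains_gamma gamma_perm_inv[OF assms]
  by (auto simp: cls_def contains_iff_occurs_at)

section \<open>Modified ascent sequences\<close>

(* Cerbai and Claesson's characterization: an entry other than the first is an ascent top
   iff it is the leftmost copy of its value. *)
definition ascents_are_first_occurrences :: "nat list \<Rightarrow> bool" where
  "ascents_are_first_occurrences x \<longleftrightarrow>
     (\<forall>i. 0 < i \<and> i < length x \<longrightarrow> (x ! (i - 1) < x ! i \<longleftrightarrow> x ! i \<notin> set (take i x)))"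

lemma ascents_are_first_occurrences_snoc:
  "ascents_are_first_occurrences (v @ [a]) \<longleftrightarrow>
     ascents_are_first_occurrences v \<and> (v \<noteq> [] \<longrightarrow> (last v < a \<longleftrightarrow> a \<notin> set v))"
proof -
  let ?P = "\<lambda>x i. x ! (i - 1) < x ! i \<longleftrightarrow> x ! i \<notin> set (take i x)"
  have "?P (v @ [a]) i \<longleftrightarrow> ?P v i" if "0 < i" "i < length v" for i
    using that by (simp add: nth_append less_imp_diff_less)
  moreover have "?P (v @ [a]) (length v) \<longleftrightarrow> (last v < a \<longleftrightarrow> a \<notin> set v)" if "v \<noteq> []"
    using that by (simp add: nth_append last_conv_nth)
  ultimately show ?thesis
    unfolding ascents_are_first_occurrences_def
    by (auto simp: less_Suc_eq)
qed

lemma ascents_are_first_occurrences_map: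
  assumes "strict_mono_on (set v) h"
  shows "ascents_are_first_occurrences (map h v) \<longleftrightarrow> ascents_are_first_occurrences v"
proof -
  have "h (v ! (i - 1)) < h (v ! i) \<longleftrightarrow> v ! (i - 1) < v ! i"
    and "h (v ! i) \<in> h ` set (take i v) \<longleftrightarrow> v ! i \<in> set (take i v)"
    if "0 < i" "i < length v" for i
    using that assms strict_mono_on_less[OF assms] strict_mono_on_imp_inj_on[OF assms]
    by (simp_all add: inj_on_image_mem_iff set_take_subset)
  then show ?thesis
    by (simp add: ascents_are_first_occurrences_def take_map less_imp_diff_less)
qed

lemma asc_snoc:
  assumes "v \<noteq> []"
  shows "asc (v @ [a]) = asc v + (if last v < a then 1 else 0)"
proof -
  define S where "S = {i. Suc i < length v \<and> v ! i < v ! Suc i}"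
  have "finite S"
    by (rule finite_subset[of _ "{..<length v}"]) (auto simp: S_def)
  moreover have "length v - 1 \<notin> S"
    by (auto simp: S_def)
  moreover have "{i. Suc i < length (v @ [a]) \<and> (v @ [a]) ! i < (v @ [a]) ! Suc i} =
      S \<union> (if last v < a then {length v - 1} else {})" (is "?A = ?B")
  proof (rule set_eqI)
    fix i
    consider "Suc i < length v" | "i = length v - 1" | "length v \<le> i"
      by linarith
    then show "i \<in> ?A \<longleftrightarrow> i \<in> ?B"
      using assms by cases (auto simp: S_def nth_append last_conv_nth neq_Nil_conv)
  qed
  ultimately show ?thesis
    by (simp add: asc_def S_def[symmetric])
qed

lemma asc_map:
  assumes "strict_mono_on (set v) h"
  shows "asc (map h v) = asc v"
proof -
  have "map h v ! i < map h v ! Suc i \<longleftrightarrow> v ! i < v ! Suc i" if "Suc i < length v" for i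
    using that strict_mono_on_less[OF assms] by simp
  then show ?thesis
    unfolding asc_def by (metis (lifting) length_map)
qed

definition bump :: "nat \<Rightarrow> nat \<Rightarrow> nat" where
  "bump a = (\<lambda>c. if a \<le> c then c + 1 else c)"

lemma strict_mono_on_bump: "strict_mono_on A (bump a)"
  by (auto simp: bump_def intro: strict_mono_onI)

lemma bump_ge: "c \<le> bump a c"
  by (simp add: bump_def)

lemma not_in_bump_image: "a \<notin> bump a ` A"
  by (auto simp: bump_def)

lemma bump_less: "c < a \<Longrightarrow> bump a c = c"
  by (simp add: bump_def)

lemma bump_image_Icc:
  assumes "1 \<le> a" "a \<le> Suc m"
  shows "bump a ` {1..m} = {1..Suc m} - {a}"
proof
  show "bump a ` {1..m} \<subseteq> {1..Suc m} - {a}"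
    using assms by (auto simp: bump_def)
  show "{1..Suc m} - {a} \<subseteq> bump a ` {1..m}"
  proof
    fix d assume d: "d \<in> {1..Suc m} - {a}"
    show "d \<in> bump a ` {1..m}"
    proof (cases "d < a")
      case True
      then show ?thesis
        using d assms by (intro image_eqI[of d _ d]) (auto simp: bump_def)
    next
      case False
      then show ?thesis
        using d assms by (intro image_eqI[of d _ "d - 1"]) (auto simp: bump_def)
    qed
  qed
qed

lemma set_modasc: "x \<in> modasc \<Longrightarrow> x \<noteq> [] \<Longrightarrow> set x = {1..Suc (asc x)}"
proof (induction rule: modasc.induct)
  case one
  then show ?case
    by (simp add: asc_def)
next
  case (append_le v a)
  have "a \<in> set v"
    using append_le last_in_set[of v] by fastforce
  moreover have "asc (v @ [a]) = asc v"
    using append_le.hyps by (simp add: asc_snoc)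
  ultimately show ?case
    using append_le by (simp add: insert_absorb)
next
  case (append_gt v a)
  have "last (map (bump a) v) = last v"
    using append_gt.hyps by (simp add: last_map bump_less)
  then have "asc (map (bump a) v @ [a]) = Suc (asc v)"
    using append_gt.hyps asc_map[OF strict_mono_on_bump] by (simp add: asc_snoc)
  moreover have "set (map (bump a) v @ [a]) = insert a (bump a ` {1..Suc (asc v)})"
    using append_gt by simp
  moreover have "insert a (bump a ` {1..Suc (asc v)}) = {1..Suc (Suc (asc v))}"
    using append_gt.hyps bump_image_Icc[of a "Suc (asc v)"] by (simp add: insert_absorb)
  ultimately show ?case
    unfolding bump_def by simp
qed simp

lemma cay_modasc: "x \<in> modasc \<Longrightarrow> cay x"
  using set_modasc[of x] unfolding cay_def by (cases "x = []") auto

lemma ascents_are_first_occurrences_modasc: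
  "x \<in> modasc \<Longrightarrow> ascents_are_first_occurrences x"
proof (induction rule: modasc.induct)
  case (append_le v a)
  then have "a \<in> set v"
    using set_modasc[of v] last_in_set[of v] by auto
  then show ?case
    using append_le by (simp add: ascents_are_first_occurrences_snoc)
next
  case (append_gt v a)
  have "last (map (bump a) v) = last v" "a \<notin> set (map (bump a) v)"
    using append_gt.hyps not_in_bump_image[of a "set v"] by (auto simp: last_map bump_less)
  then have "ascents_are_first_occurrences (map (bump a) v @ [a])"
    using append_gt ascents_are_first_occurrences_map[OF strict_mono_on_bump]
    by (simp add: ascents_are_first_occurrences_snoc)
  then show ?case
    unfolding bump_def .
qed (auto simp: ascents_are_first_occurrences_def)

lemma obtain_unbumped:
  assumes "set v = {1..Suc m} - {a}" "a \<in> {1..Suc m}"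
  obtains u where "v = map (bump a) u" "set u = {1..m}"
proof -
  have img: "set v = bump a ` {1..m}"
    using assms bump_image_Icc[of a m] by simp
  then obtain u where u: "v = map (bump a) u"
    using ex_map_conv[of v "bump a"] by blast
  then have "bump a ` set u = bump a ` {1..m}"
    using img by simp
  then have "set u = {1..m}"
    using inj_image_eq_iff strict_mono_on_imp_inj_on[OF strict_mono_on_bump] by blast
  then show thesis
    using that u by blast
qed

lemma bump_snoc_in_modasc:
  assumes "u \<in> modasc" "u \<noteq> []" "set u = {1..m}" "last u < a" "a \<le> Suc m"
  shows "map (bump a) u @ [a] \<in> modasc"
proof -
  have "m = Suc (asc u)"
    using set_modasc[OF assms(1,2)] assms(3) by simp
  then show ?thesis
    using modasc.append_gt[OF assms(1,2,4)] assms(5) by (simp add: bump_def)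
qed

lemma modasc_if_ascents_are_first_occurrences:
  "cay x \<Longrightarrow> ascents_are_first_occurrences x \<Longrightarrow> x \<in> modasc"
proof (induction "length x" arbitrary: x rule: less_induct)
  case less
  show ?case
  proof (cases x rule: rev_cases)
    case (snoc v a)
    obtain M where "set x = {1..M}"
      using less.prems(1) cay_def by auto
    then obtain m where m: "set x = {1..Suc m}"
      using snoc by (cases M) auto
    have a: "a \<in> {1..Suc m}"
      using m snoc by auto
    have v: "ascents_are_first_occurrences v" "v \<noteq> [] \<Longrightarrow> last v < a \<longleftrightarrow> a \<notin> set v"
      using less.prems(2) by (simp_all add: snoc ascents_are_first_occurrences_snoc)
    have IH: "u \<in> modasc" if "cay u" "ascents_are_first_occurrences u" "length u = length v" for u
      using less.hyps that snoc by simp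
    consider "v = []" | "v \<noteq> []" "a \<in> set v" | "v \<noteq> []" "a \<notin> set v"
      by blast
    then show ?thesis
    proof cases
      case 1
      then have "a = 1"
        using m snoc by (auto simp: set_eq_iff)
      then show ?thesis
        using 1 snoc modasc.one by simp
    next
      case 2
      then have "cay v"
        using m snoc by (auto simp: cay_def insert_absorb)
      then show ?thesis
        using 2 snoc v a IH modasc.append_le[of v a] by (auto simp: not_less)
    next
      case 3
      then obtain u where u: "v = map (bump a) u" "set u = {1..m}"
        using obtain_unbumped[OF _ a, of v] m snoc 3 by auto
      have "u \<in> modasc"
        using IH u v(1) ascents_are_first_occurrences_map[OF strict_mono_on_bump]
        by (auto simp: cay_def)
      moreover have "u \<noteq> []" "last u < a"
        using u 3 v(2) bump_ge[of "last u" a] by (auto simp: last_map)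
      ultimately have "map (bump a) u @ [a] \<in> modasc"
        using u(2) m snoc by (intro bump_snoc_in_modasc) auto
      then show ?thesis
        using snoc u by simp
    qed
  qed (simp add: modasc.empty)
qed

lemma modasc_iff: "x \<in> modasc \<longleftrightarrow> cay x \<and> ascents_are_first_occurrences x"
  using cay_modasc ascents_are_first_occurrences_modasc modasc_if_ascents_are_first_occurrences
  by blast

section \<open>Fishburn permutations\<close>

lemma fishburn_gamma:
  assumes afo: "ascents_are_first_occurrences x"
  shows "fishburn (gamma x)"
  unfolding fishburn_def
proof clarify
  fix i k
  assume ik: "Suc i < k" "k < length (gamma x)" "gamma x ! i < gamma x ! Suc i"
    and r: "gamma x ! k + 1 = gamma x ! i"
  define n where "n = length x"
  define p where "p = gamma x ! i"
  define q where "q = gamma x ! Suc i"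
  have range: "p \<in> {2..n}" "q \<in> {1..n}"
    using gamma_nth_range[of i x] gamma_nth_range[of "Suc i" x] gamma_nth_range[of k x] ik r
    by (auto simp: p_def q_def n_def)
  have "gamma_key x p < gamma_key x q"
    using gamma_key_less_iff[of i x "Suc i"] ik by (simp add: p_def q_def)
  then have p_q: "x ! (p - 1) < x ! (q - 1)"
    using ik(3) by (auto simp: gamma_key_def p_def q_def)
  have "gamma x ! k = p - 1"
    using r by (simp add: p_def)
  then have "gamma_key x p < gamma_key x (p - 1)"
    using gamma_key_less_iff[of i x k] ik by (simp add: p_def)
  then have "\<not> x ! (p - 1 - 1) < x ! (p - 1)"
    by (auto simp: gamma_key_def)
  moreover have "0 < p - 1" "p - 1 < length x"
    using range by (auto simp: n_def)
  ultimately have "x ! (p - 1) \<in> set (take (p - 1) x)"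
    using afo unfolding ascents_are_first_occurrences_def by blast
  then obtain j where j: "j < p - 1" "x ! j = x ! (p - 1)"
    by (auto simp: in_set_conv_nth)
  then have "gamma_key x p < gamma_key x (Suc j)" "gamma_key x (Suc j) < gamma_key x q"
    using range p_q by (auto simp: gamma_key_def n_def)
  moreover have "Suc j \<in> set (gamma x)"
    using j range by (auto simp: set_gamma n_def)
  then obtain m where m: "m < n" "gamma x ! m = Suc j"
    by (auto simp: in_set_conv_nth n_def)
  ultimately have "i < m" "m < Suc i"
    using gamma_key_less_iff[of i x m] gamma_key_less_iff[of m x "Suc i"] ik
    by (auto simp: p_def q_def n_def)
  then show False
    by simp
qed

(* Cutting 0, 1, 2, ... after every j with C j, block_index C j is the number of the block of j. *)
primrec block_index :: "(nat \<Rightarrow> bool) \<Rightarrow> nat \<Rightarrow> nat" where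
  "block_index C 0 = 1"
| "block_index C (Suc j) = block_index C j + (if C j then 1 else 0)"

lemma block_index_mono: "a \<le> b \<Longrightarrow> block_index C a \<le> block_index C b"
  by (induction b) (auto simp: le_Suc_eq)

lemma block_index_pos: "1 \<le> block_index C a"
  using block_index_mono[of 0 a C] by simp

lemma block_index_less:
  assumes "a \<le> c" "c < b" "C c"
  shows "block_index C a < block_index C b"
proof -
  have "block_index C a \<le> block_index C c"
    using assms(1) by (rule block_index_mono)
  also have "\<dots> < block_index C (Suc c)"
    using assms(3) by simp
  also have "\<dots> \<le> block_index C b"
    by (rule block_index_mono) (use assms(2) in simp)
  finally show ?thesis .
qed

lemma block_index_onto:
  "1 \<le> v \<Longrightarrow> v \<le> block_index C n \<Longrightarrow> \<exists>j\<le>n. block_index C j = v"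
proof (induction n)
  case (Suc n)
  show ?case
  proof (cases "v \<le> block_index C n")
    case True
    then show ?thesis
      using Suc by (auto intro: le_SucI)
  next
    case False
    then have "v = block_index C (Suc n)"
      using Suc.prems by (auto split: if_splits)
    then show ?thesis
      by blast
  qed
qed simp

lemma decreasing_within_block:
  fixes p :: "'a::linorder list"
  assumes "distinct p" "\<And>j. Suc j < length p \<Longrightarrow> p ! j < p ! Suc j \<Longrightarrow> C j"
    and "a < b" "b < length p" "block_index C a = block_index C b"
  shows "p ! b < p ! a"
  using assms(3-5)
proof (induction b)
  case (Suc b)
  have "\<not> C b"
    using Suc.prems block_index_less[of a b "Suc b" C] by auto
  then have "\<not> p ! b < p ! Suc b"
    using assms(2) Suc.prems(2) by blast
  moreover have "p ! b \<noteq> p ! Suc b"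
    using assms(1) Suc.prems(2) by (simp add: nth_eq_iff_index_eq)
  ultimately have step: "p ! Suc b < p ! b"
    by simp
  show ?case
  proof (cases "a = b")
    case False
    then have "block_index C a = block_index C b"
      using Suc.prems block_index_mono[of a b C] block_index_mono[of b "Suc b" C] by simp
    then have "p ! b < p ! a"
      using Suc False by simp
    then show ?thesis
      using step by simp
  qed (use step in simp)
qed simp

definition block_word :: "(nat \<Rightarrow> bool) \<Rightarrow> nat list \<Rightarrow> nat list" where
  "block_word C p = map (\<lambda>i. block_index C (i - 1)) (perm_inv p)"

lemma length_block_word [simp]: "length (block_word C p) = length p"
  by (simp add: block_word_def)

lemma block_word_at:
  assumes "is_perm p" "j < length p"
  shows "block_word C p ! (p ! j - 1) = block_index C j"
proof -
  have "p ! j - 1 < length p"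
    using is_perm_nth_range[OF assms] by auto
  then show ?thesis
    using perm_inv_nth_nth[OF assms] by (simp add: block_word_def)
qed

lemma block_word_obtain_at:
  assumes "is_perm p" "i < length p"
  obtains j where "j < length p" "i = p ! j - 1" "block_word C p ! i = block_index C j"
proof -
  obtain j where "j < length p" "p ! j = Suc i"
    by (rule is_perm_obtain_nth[OF assms(1), of "Suc i"]) (use assms(2) in auto)
  then show thesis
    using that block_word_at[OF assms(1)] by force
qed

lemma cay_block_word:
  assumes "is_perm p"
  shows "cay (block_word C p)"
proof (cases "p = []")
  case True
  then show ?thesis
    by (auto simp: block_word_def perm_inv_def cay_def intro: exI[of _ 0])
next
  case False
  then obtain N where N: "length p = Suc N"
    by (cases p) auto
  have "set (block_word C p) = {1..block_index C N}"
  proof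
    show "set (block_word C p) \<subseteq> {1..block_index C N}"
    proof
      fix v assume "v \<in> set (block_word C p)"
      then obtain i where "i < length p" "v = block_word C p ! i"
        by (auto simp: in_set_conv_nth)
      then obtain j where "j < length p" "v = block_index C j"
        using block_word_obtain_at[OF assms] by metis
      then show "v \<in> {1..block_index C N}"
        using block_index_pos block_index_mono[of j N] N by auto
    qed
    show "{1..block_index C N} \<subseteq> set (block_word C p)"
    proof
      fix v assume "v \<in> {1..block_index C N}"
      then obtain j where "j \<le> N" "v = block_index C j"
        using block_index_onto by (metis atLeastAtMost_iff)
      moreover have "j < length p"
        using \<open>j \<le> N\<close> N by simp
      moreover have "p ! j - 1 < length p"
        using is_perm_nth_range[OF assms \<open>j < length p\<close>] by auto
      ultimately show "v \<in> set (block_word C p)"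
        using block_word_at[OF assms] by (metis length_block_word nth_mem)
    qed
  qed
  then show ?thesis
    unfolding cay_def ..
qed

context
  fixes C :: "nat \<Rightarrow> bool" and p :: "nat list"
  assumes perm: "is_perm p"
    and decreasing: "\<And>a b. a < b \<Longrightarrow> b < length p \<Longrightarrow> block_index C a = block_index C b \<Longrightarrow> p ! b < p ! a"
begin

lemma gamma_block_word: "gamma (block_word C p) = p"
  unfolding gamma_eq_iff sorted_wrt_iff_nth_less
proof (intro conjI allI impI)
  show "set p = {1..length (block_word C p)}"
    using perm by (simp add: is_perm_def)
  fix a b assume ab: "a < b" "b < length p"
  have "block_index C a \<le> block_index C b"
    using ab by (simp add: block_index_mono)
  moreover have "block_index C a = block_index C b \<Longrightarrow> length p - p ! a < length p - p ! b"
    using decreasing[OF ab] is_perm_nth_range[OF perm, of a] ab by auto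
  ultimately show "gamma_key (block_word C p) (p ! a) < gamma_key (block_word C p) (p ! b)"
    using block_word_at[OF perm] ab by (auto simp: gamma_key_def le_less)
qed

lemma block_word_repeated_iff:
  assumes j: "j < length p"
  shows "block_word C p ! (p ! j - 1) \<in> set (take (p ! j - 1) (block_word C p)) \<longleftrightarrow>
    Suc j < length p \<and> \<not> C j"
proof
  assume "block_word C p ! (p ! j - 1) \<in> set (take (p ! j - 1) (block_word C p))"
  then obtain i where i: "i < p ! j - 1" "block_word C p ! i = block_index C j"
    using block_word_at[OF perm j] by (auto simp: in_set_conv_nth)
  have "i < length p"
    using i(1) is_perm_nth_range[OF perm j] by auto
  then obtain t where t: "t < length p" "i = p ! t - 1" "block_word C p ! i = block_index C t"
    by (rule block_word_obtain_at[OF perm])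
  have "p ! t < p ! j"
    using i(1) t(2) is_perm_nth_range[OF perm t(1)] by simp
  moreover have same_block: "block_index C j = block_index C t"
    using i(2) t(3) by simp
  ultimately have "j < t"
    using decreasing[of t j] t(1) j by (cases j t rule: linorder_cases) auto
  then show "Suc j < length p \<and> \<not> C j"
    using t(1) same_block block_index_less[of j j t C] by auto
next
  assume next_in_block: "Suc j < length p \<and> \<not> C j"
  define i where "i = p ! Suc j - 1"
  have "p ! Suc j < p ! j"
    using decreasing[of j "Suc j"] next_in_block by simp
  moreover have "1 \<le> p ! Suc j" "p ! j \<le> length p"
    using is_perm_nth_range[OF perm] next_in_block j by auto
  ultimately have "i < length (take (p ! j - 1) (block_word C p))"
    by (simp add: i_def)
  then have "take (p ! j - 1) (block_word C p) ! i \<in> set (take (p ! j - 1) (block_word C p))"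
    by (rule nth_mem)
  moreover have "take (p ! j - 1) (block_word C p) ! i = block_word C p ! (p ! j - 1)"
    using block_word_at[OF perm] next_in_block j \<open>i < length (take (p ! j - 1) (block_word C p))\<close>
    by (simp add: i_def)
  ultimately show "block_word C p ! (p ! j - 1) \<in> set (take (p ! j - 1) (block_word C p))"
    by simp
qed

lemma ascents_are_first_occurrences_block_word:
  assumes cut: "\<And>j j'. j < length p \<Longrightarrow> j' < length p \<Longrightarrow> p ! j' + 1 = p ! j \<Longrightarrow>
      j' < j \<longleftrightarrow> (Suc j < length p \<longrightarrow> C j)"
  shows "ascents_are_first_occurrences (block_word C p)"
  unfolding ascents_are_first_occurrences_def
proof (intro allI impI)
  fix i assume i: "0 < i \<and> i < length (block_word C p)"
  obtain j where j: "j < length p" "p ! j = Suc i"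
    by (rule is_perm_obtain_nth[OF perm, of "Suc i"]) (use i in auto)
  obtain j' where j': "j' < length p" "p ! j' = i"
    by (rule is_perm_obtain_nth[OF perm, of i]) (use i in auto)
  have "block_index C j' < block_index C j \<longleftrightarrow> j' < j"
  proof (cases "j' < j")
    case True
    then have "block_index C j' \<noteq> block_index C j"
      using decreasing[of j' j] j j' by auto
    then show ?thesis
      using True block_index_mono[of j' j C] by simp
  next
    case False
    then show ?thesis
      using block_index_mono[of j j' C] by simp
  qed
  moreover have "block_word C p ! (i - 1) = block_index C j'"
    using block_word_at[OF perm j'(1)] j' by simp
  moreover have "block_word C p ! i = block_index C j"
    using block_word_at[OF perm j(1)] j by simp
  ultimately show "block_word C p ! (i - 1) < block_word C p ! i \<longleftrightarrow>
      block_word C p ! i \<notin> set (take i (block_word C p))"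
    using block_word_repeated_iff[OF j(1)] cut[OF j(1) j'(1)] j j' by simp
qed

end

definition fishburn_cut :: "nat list \<Rightarrow> nat \<Rightarrow> bool" where
  "fishburn_cut p j \<longleftrightarrow> Suc j < length p \<and> (\<forall>k. j < k \<and> k < length p \<longrightarrow> p ! k + 1 \<noteq> p ! j)"

lemma fishburn_cut_at_ascent:
  assumes "fishburn p" "Suc j < length p" "p ! j < p ! Suc j"
  shows "fishburn_cut p j"
  unfolding fishburn_cut_def
proof (intro conjI allI impI)
  fix k assume k: "j < k \<and> k < length p"
  show "p ! k + 1 \<noteq> p ! j"
  proof (cases "k = Suc j")
    case False
    then show ?thesis
      using assms(1,3) k unfolding fishburn_def by (metis Suc_lessI)
  qed (use assms(3) in simp)
qed (rule assms(2))

lemma fishburn_cut_iff: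
  assumes perm: "is_perm p" and j: "j < length p" "j' < length p" "p ! j' + 1 = p ! j"
  shows "j' < j \<longleftrightarrow> (Suc j < length p \<longrightarrow> fishburn_cut p j)"
proof -
  have "p ! k + 1 = p ! j \<longleftrightarrow> k = j'" if "k < length p" for k
    using is_perm_nth_eq_iff[OF perm that j(2)] j(3) by auto
  then have "fishburn_cut p j \<longleftrightarrow> Suc j < length p \<and> \<not> j < j'"
    using j(2) unfolding fishburn_cut_def by blast
  moreover have "j' \<noteq> j"
    using j(3) by auto
  ultimately show ?thesis
    using j by auto
qed

lemma fishburn_in_gamma_image_modasc:
  assumes perm: "is_perm p" and "fishburn p"
  shows "p \<in> gamma ` modasc"
proof -
  let ?C = "fishburn_cut p"
  have "distinct p"
    using perm by (simp add: is_perm_def)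
  have decreasing: "p ! b < p ! a"
    if "a < b" "b < length p" "block_index ?C a = block_index ?C b" for a b
    using decreasing_within_block[OF \<open>distinct p\<close> fishburn_cut_at_ascent[OF assms(2)] that] .
  have "ascents_are_first_occurrences (block_word ?C p)"
    by (rule ascents_are_first_occurrences_block_word[where C = ?C and p = p, OF perm decreasing fishburn_cut_iff[OF perm]])
  then have "block_word ?C p \<in> modasc"
    using cay_block_word[OF perm] modasc_iff by blast
  moreover have "gamma (block_word ?C p) = p"
    using gamma_block_word[where C = ?C and p = p, OF perm decreasing] .
  ultimately show ?thesis
    by (metis image_eqI)
qed

lemma gamma_image_modasc: "gamma ` modasc = {p. is_perm p \<and> fishburn p}"
  using is_perm_gamma fishburn_gamma fishburn_in_gamma_image_modasc by (auto simp: modasc_iff)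

theorem theorem5p3:
  assumes "\<forall>\<sigma>\<in>\<Omega>. is_perm \<sigma>"
  shows "fishburn_av \<Omega> = gamma ` modasc_av (inv_class \<Omega>)"
proof -
  have avoid: "(\<forall>y\<in>inv_class \<Omega>. \<not> contains x y) \<longleftrightarrow> (\<forall>\<sigma>\<in>\<Omega>. \<not> contains (gamma x) \<sigma>)" for x
    using assms contains_gamma_iff by (auto simp: inv_class_def)
  have "gamma ` modasc_av (inv_class \<Omega>) = {p \<in> gamma ` modasc. \<forall>\<sigma>\<in>\<Omega>. \<not> contains p \<sigma>}"
    unfolding modasc_av_def using avoid by auto
  then show ?thesis
    unfolding fishburn_av_def gamma_image_modasc by auto
qed

end
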